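(* Let $M \geq 1$ be an integer and let $V = (\mathbb{Z}/2\mathbb{Z})^{F(M)}$. Then there are vectors $\xi_1,\dots,\xi_M \in V$ such that every subset of $\{\xi_1,\dots,\xi_M\}$ consisting of at least $95$ percent of them (i.e. of at least $0.95M$ of the indices) spans $V$.
   Context: For a positive integer $M$, $F(M) = M$ if $M \leq 19$ and $F(M) = \lfloor M/4 \rfloor$ if $M \geq 20$. *)

theory Defs
  imports Main "HOL-Library.Z2"
begin

definition F :: "nat \<Rightarrow> nat" where
  "F M = (if M \<le> 19 then M else M div 4)"

text \<open>Vectors of V = (Z/2Z)^n are represented by their coordinate functions
  nat \<Rightarrow> bit, only coordinates j < n being relevant.\<close>
definition spans_F2 :: "nat \<Rightarrow> (nat \<Rightarrow> nat \<Rightarrow> bit) \<Rightarrow> nat set \<Rightarrow> bool" where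
  "spans_F2 n xi I \<longleftrightarrow>
     (\<forall>v :: nat \<Rightarrow> bit. \<exists>c :: nat \<Rightarrow> bit. \<forall>j<n. v j = (\<Sum>i\<in>I. c i * xi i j))"

end

theory Submission
  imports Defs
begin

(* Choose subsets G_0, ..., G_(n-1) of {1..M}, n = F M, and let xi_i be the vector whose j-th
   coordinate is 1 iff i \<in> G_j. If xi_i, i \<in> I, do not span, some nonzero functional y
   kills all of them; with Y the support of y, the set of i lying in an odd number of the G_j,
   j \<in> Y, is then disjoint from I, so it has at most M/20 elements. Thus it suffices that the
   binary linear code generated by the G_j has minimum distance > M/20. Such a code is built
   greedily: the k-th generator only has to avoid the radius-M/20 Hamming balls around the 2^k
   codewords already present, and a binomial estimate shows that 2^(M/4) such balls do not
   cover all 2^M subsets. *)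

(* Keep the simplifier on ring arithmetic in bit instead of rewriting + and * to XOR and AND. *)
declare add_bit_eq_xor [simp del] mult_bit_eq_and [simp del]

lemma bit_add_self [simp]: "(x::bit) + x = 0"
  by (simp add: add_bit_eq_xor)

lemma bit_add_eq_iff: "(a::bit) + b = c \<longleftrightarrow> a = c + b"
  by (cases b) (auto simp: add.assoc)

lemma of_nat_bit_eq_0_iff: "(of_nat m :: bit) = 0 \<longleftrightarrow> even m"
  by (induction m) auto

definition has_annihilator :: "nat \<Rightarrow> (nat \<Rightarrow> nat \<Rightarrow> bit) \<Rightarrow> nat set \<Rightarrow> bool" where
  "has_annihilator n xi I \<longleftrightarrow>
     (\<exists>y. (\<exists>j<n. y j \<noteq> 0) \<and> (\<forall>i\<in>I. (\<Sum>j<n. y j * xi i j) = 0))"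

lemma spans_F2_Suc_pivot:
  assumes "finite I" "s \<in> I" "xi s n = 1"
    and "spans_F2 n (\<lambda>i j. xi i j + xi i n * xi s j) (I - {s})"
  shows "spans_F2 (Suc n) xi I"
  unfolding spans_F2_def
proof
  fix v :: "nat \<Rightarrow> bit"
  obtain c where c: "\<forall>j<n. v j + v n * xi s j = (\<Sum>i\<in>I - {s}. c i * (xi i j + xi i n * xi s j))"
    using assms(4)[unfolded spans_F2_def, rule_format, of "\<lambda>j. v j + v n * xi s j"] by blast
  define T where "T = (\<Sum>i\<in>I - {s}. c i * xi i n)"
  define c' where "c' = c(s := v n + T)"
  have sum_I: "(\<Sum>i\<in>I. c' i * xi i j) = (v n + T) * xi s j + (\<Sum>i\<in>I - {s}. c i * xi i j)" for j
  proof -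
    have "(\<Sum>i\<in>I - {s}. c' i * xi i j) = (\<Sum>i\<in>I - {s}. c i * xi i j)"
      by (rule sum.cong) (auto simp: c'_def)
    then show ?thesis
      using sum.remove[OF assms(1,2), of "\<lambda>i. c' i * xi i j"] by (simp add: c'_def)
  qed
  have "v j = (\<Sum>i\<in>I. c' i * xi i j)" if "j < Suc n" for j
  proof (cases "j = n")
    case True
    have "(\<Sum>i\<in>I. c' i * xi i n) = v n + T + T"
      using sum_I[of n] assms(3) by (simp add: T_def)
    with True show ?thesis by (simp add: add.assoc)
  next
    case False
    with that have "v j + v n * xi s j = (\<Sum>i\<in>I - {s}. c i * (xi i j + xi i n * xi s j))"
      using c by simp
    also have "\<dots> = (\<Sum>i\<in>I - {s}. c i * xi i j) + T * xi s j"
      unfolding T_def by (simp only: distrib_left sum.distrib sum_distrib_right mult.assoc)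
    finally have "v j = (\<Sum>i\<in>I - {s}. c i * xi i j) + T * xi s j + v n * xi s j"
      by (rule bit_add_eq_iff[THEN iffD1])
    then show ?thesis using sum_I[of j] by (simp add: algebra_simps)
  qed
  then show "\<exists>c. \<forall>j<Suc n. v j = (\<Sum>i\<in>I. c i * xi i j)" by blast
qed

lemma has_annihilator_Suc_pivot:
  assumes "xi s n = 1"
    and "has_annihilator n (\<lambda>i j. xi i j + xi i n * xi s j) (I - {s})"
  shows "has_annihilator (Suc n) xi I"
proof -
  obtain y where y_nonzero: "\<exists>j<n. y j \<noteq> 0"
    and y_kills: "\<forall>i\<in>I - {s}. (\<Sum>j<n. y j * (xi i j + xi i n * xi s j)) = 0"
    using assms(2) unfolding has_annihilator_def by blast
  define t where "t = (\<Sum>j<n. y j * xi s j)"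
  define y' where "y' = y(n := t)"
  have sum_y': "(\<Sum>j<Suc n. y' j * xi i j) = (\<Sum>j<n. y j * xi i j) + t * xi i n" for i
  proof -
    have "(\<Sum>j<n. y' j * xi i j) = (\<Sum>j<n. y j * xi i j)"
      by (rule sum.cong) (auto simp: y'_def)
    then show ?thesis by (simp add: y'_def)
  qed
  have "(\<Sum>j<Suc n. y' j * xi i j) = 0" if "i \<in> I" for i
  proof (cases "i = s")
    case True
    then show ?thesis using sum_y'[of i] assms(1) by (simp add: t_def)
  next
    case False
    have "(\<Sum>j<n. y j * (xi i j + xi i n * xi s j)) = (\<Sum>j<n. y j * xi i j) + t * xi i n"
      by (simp add: t_def algebra_simps sum.distrib sum_distrib_left)
    with y_kills that False show ?thesis using sum_y'[of i] by simp
  qed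
  moreover have "\<exists>j<Suc n. y' j \<noteq> 0"
    using y_nonzero by (auto simp: y'_def)
  ultimately show ?thesis unfolding has_annihilator_def by blast
qed

lemma spans_F2_or_has_annihilator:
  "finite I \<Longrightarrow> spans_F2 n xi I \<or> has_annihilator n xi I"
proof (induction n arbitrary: xi I)
  case 0
  then show ?case by (simp add: spans_F2_def)
next
  case (Suc n)
  show ?case
  proof (cases "\<exists>s\<in>I. xi s n = 1")
    case True
    then obtain s where "s \<in> I" "xi s n = 1" by blast
    with Suc.prems Suc.IH[of "I - {s}" "\<lambda>i j. xi i j + xi i n * xi s j"] show ?thesis
      using spans_F2_Suc_pivot has_annihilator_Suc_pivot by blast
  next
    case False
    then have "(\<exists>j<Suc n. (of_bool (j = n) :: bit) \<noteq> 0)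
        \<and> (\<forall>i\<in>I. (\<Sum>j<Suc n. of_bool (j = n) * xi i j) = 0)"
      by auto
    then have "has_annihilator (Suc n) xi I"
      unfolding has_annihilator_def by (rule exI[of _ "\<lambda>j. of_bool (j = n)"])
    then show ?thesis ..
  qed
qed

(* The support in D of the F_2-sum of the indicator vectors of the G j, j \<in> Y: the codeword
   for message Y of the binary linear code with generator rows G j. *)
definition codeword :: "nat set \<Rightarrow> (nat \<Rightarrow> nat set) \<Rightarrow> nat set \<Rightarrow> nat set" where
  "codeword D G Y = {i \<in> D. odd (card {j \<in> Y. i \<in> G j})}"

lemma codeword_subset: "codeword D G Y \<subseteq> D"
  by (auto simp: codeword_def)

lemma codeword_cong:
  assumes "\<And>j. j \<in> Y \<Longrightarrow> G j = G' j"
  shows "codeword D G Y = codeword D G' Y"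
proof -
  have "{j \<in> Y. i \<in> G j} = {j \<in> Y. i \<in> G' j}" for i
    using assms by auto
  then show ?thesis by (simp add: codeword_def)
qed

lemma codeword_insert:
  assumes "finite Y" "k \<notin> Y"
  shows "codeword D G (insert k Y) = sym_diff (codeword D G Y) (D \<inter> G k)"
proof -
  have "{j \<in> insert k Y. i \<in> G j} = (if i \<in> G k then insert k {j \<in> Y. i \<in> G j} else {j \<in> Y. i \<in> G j})"
    for i by auto
  with assms show ?thesis by (auto simp: codeword_def)
qed

lemma exists_subset_far_from:
  assumes "finite D" "C \<subseteq> Pow D"
    and "card C * card {S. S \<subseteq> D \<and> card S \<le> d} < 2 ^ card D"
  shows "\<exists>A\<subseteq>D. \<forall>c\<in>C. d < card (sym_diff c A)"
proof -
  define B where "B = {S. S \<subseteq> D \<and> card S \<le> d}"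
  define Bad where "Bad = (\<lambda>(c, S). sym_diff c S) ` (C \<times> B)"
  have fin: "finite C" "finite B"
    using assms(1,2) finite_subset by (auto simp: B_def)
  have "card Bad \<le> card C * card B"
    unfolding Bad_def using card_image_le[of "C \<times> B"] fin by (simp add: card_cartesian_product)
  also have "\<dots> < card (Pow D)"
    using assms(1,3) by (simp add: B_def card_Pow)
  finally have "\<not> Pow D \<subseteq> Bad"
    using fin card_mono[of Bad "Pow D"] by (auto simp: Bad_def)
  then obtain A where A: "A \<subseteq> D" "A \<notin> Bad" by blast
  have "d < card (sym_diff c A)" if "c \<in> C" for c
  proof (rule ccontr)
    assume "\<not> d < card (sym_diff c A)"
    then have "sym_diff c A \<in> B"
      using that assms(2) A(1) by (auto simp: B_def)
    with that have "sym_diff c (sym_diff c A) \<in> Bad"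
      unfolding Bad_def by blast
    moreover have "sym_diff c (sym_diff c A) = A" by auto
    ultimately show False using A(2) by simp
  qed
  with A(1) show ?thesis by blast
qed

lemma exists_code_min_distance:
  assumes "finite D" "2 ^ n * card {S. S \<subseteq> D \<and> card S \<le> d} \<le> 2 ^ card D"
  shows "\<exists>G. \<forall>Y\<subseteq>{..<n}. Y \<noteq> {} \<longrightarrow> d < card (codeword D G Y)"
  using assms(2)
proof (induction n)
  case 0
  show ?case by auto
next
  case (Suc n)
  define B where "B = {S. S \<subseteq> D \<and> card S \<le> d}"
  have "finite B" "{} \<in> B"
    using assms(1) by (simp_all add: B_def)
  then have "0 < card B"
    by (auto simp: card_gt_0_iff)
  then have "2 ^ n * card B < 2 ^ Suc n * card B"
    by simp
  then have bound: "2 ^ n * card B < 2 ^ card D"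
    using Suc.prems unfolding B_def by linarith
  then have "2 ^ n * card {S. S \<subseteq> D \<and> card S \<le> d} \<le> 2 ^ card D"
    by (simp add: B_def)
  from Suc.IH[OF this] obtain G
    where G: "\<forall>Y\<subseteq>{..<n}. Y \<noteq> {} \<longrightarrow> d < card (codeword D G Y)"
    by blast
  define C where "C = codeword D G ` Pow {..<n}"
  have "card C \<le> 2 ^ n"
    unfolding C_def using card_image_le[of "Pow {..<n}" "codeword D G"] by (simp add: card_Pow)
  then have "card C * card B < 2 ^ card D"
    using bound by (meson le_less_trans mult_le_mono1)
  moreover have "C \<subseteq> Pow D"
    using codeword_subset by (auto simp: C_def)
  ultimately obtain A where A: "A \<subseteq> D" "\<forall>c\<in>C. d < card (sym_diff c A)"
    using exists_subset_far_from[OF assms(1), of C d] unfolding B_def by blast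
  have "d < card (codeword D (G(n := A)) Y)" if Y: "Y \<subseteq> {..<Suc n}" "Y \<noteq> {}" for Y
  proof (cases "n \<in> Y")
    case False
    then have "codeword D (G(n := A)) Y = codeword D G Y"
      by (intro codeword_cong) auto
    moreover have "Y \<subseteq> {..<n}"
      using False Y(1) by (auto simp: less_Suc_eq)
    ultimately show ?thesis
      using G Y(2) by simp
  next
    case True
    define Y0 where "Y0 = Y - {n}"
    have Y0: "Y0 \<subseteq> {..<n}" "finite Y0"
      using Y(1) by (auto simp: Y0_def less_Suc_eq intro: finite_subset)
    have "codeword D (G(n := A)) Y = sym_diff (codeword D (G(n := A)) Y0) A"
      using codeword_insert[OF Y0(2), of n D "G(n := A)"] True A(1)
      by (simp add: Y0_def insert_absorb Int_absorb1)
    also have "codeword D (G(n := A)) Y0 = codeword D G Y0"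
      by (intro codeword_cong) (auto simp: Y0_def)
    finally have "codeword D (G(n := A)) Y = sym_diff (codeword D G Y0) A" .
    moreover have "codeword D G Y0 \<in> C"
      using Y0(1) by (simp add: C_def)
    ultimately show ?thesis
      using A(2) by simp
  qed
  then show ?case by blast
qed

lemma spans_F2_if_min_distance:
  assumes "finite D" "I \<subseteq> D" "card (D - I) \<le> d"
    and "\<forall>Y\<subseteq>{..<n}. Y \<noteq> {} \<longrightarrow> d < card (codeword D G Y)"
  shows "spans_F2 n (\<lambda>i j. of_bool (i \<in> G j)) I"
proof (rule ccontr)
  assume "\<not> spans_F2 n (\<lambda>i j. of_bool (i \<in> G j)) I"
  moreover have "finite I"
    by (rule finite_subset[OF assms(2,1)])
  ultimately have "has_annihilator n (\<lambda>i j. of_bool (i \<in> G j)) I"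
    using spans_F2_or_has_annihilator by blast
  then obtain y where y_nonzero: "\<exists>j<n. y j \<noteq> 0"
    and y_kills: "\<forall>i\<in>I. (\<Sum>j<n. y j * of_bool (i \<in> G j)) = (0::bit)"
    unfolding has_annihilator_def by blast
  define Y where "Y = {j. j < n \<and> y j = 1}"
  have "i \<notin> I" if "i \<in> codeword D G Y" for i
  proof
    assume "i \<in> I"
    have "(\<Sum>j<n. y j * of_bool (i \<in> G j)) = (\<Sum>j<n. of_bool (j \<in> Y \<and> i \<in> G j) :: bit)"
      by (rule sum.cong) (auto simp: Y_def mult_bit_eq_and)
    also have "\<dots> = of_nat (card {j \<in> Y. i \<in> G j})"
      by (simp add: Int_def Y_def conj_commute conj_left_commute)
    finally have "even (card {j \<in> Y. i \<in> G j})"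
      using y_kills \<open>i \<in> I\<close> by (simp add: of_nat_bit_eq_0_iff)
    with that show False by (simp add: codeword_def)
  qed
  then have "codeword D G Y \<subseteq> D - I"
    using codeword_subset by blast
  then have "card (codeword D G Y) \<le> card (D - I)"
    using assms(1) by (intro card_mono) simp_all
  moreover have "Y \<subseteq> {..<n}" "Y \<noteq> {}"
    using y_nonzero by (auto simp: Y_def)
  with assms(4) have "d < card (codeword D G Y)"
    by blast
  ultimately show False
    using assms(3) by linarith
qed

lemma card_subsets_card_le:
  assumes "finite D"
  shows "card {S. S \<subseteq> D \<and> card S \<le> d} \<le> (\<Sum>i\<le>d. card D choose i)"
proof -
  have "{S. S \<subseteq> D \<and> card S \<le> d} = (\<Union>i\<le>d. {S. S \<subseteq> D \<and> card S = i})" by auto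
  then have "card {S. S \<subseteq> D \<and> card S \<le> d} \<le> (\<Sum>i\<le>d. card {S. S \<subseteq> D \<and> card S = i})"
    by (simp add: card_UN_le)
  also have "\<dots> = (\<Sum>i\<le>d. card D choose i)"
    using n_subsets[OF assms] by simp
  finally show ?thesis .
qed

lemma binomial_partial_sum_le:
  assumes "d \<le> m"
  shows "(\<Sum>i\<le>d. m choose i) * 4 ^ (m - d) \<le> 5 ^ m"
proof -
  have "(\<Sum>i\<le>d. m choose i) * 4 ^ (m - d) \<le> (\<Sum>i\<le>d. (m choose i) * 1 ^ i * 4 ^ (m - i))"
    unfolding sum_distrib_right by (rule sum_mono) (simp add: power_increasing diff_le_mono2)
  also have "\<dots> \<le> (\<Sum>i\<le>m. (m choose i) * 1 ^ i * 4 ^ (m - i))"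
    by (rule sum_mono2) (use assms in auto)
  also have "\<dots> = 5 ^ m"
    using binomial[of 1 4 m] by simp
  finally show ?thesis .
qed

lemma pow_div4_div20_lt:
  assumes "0 < m"
  shows "2 ^ (m div 4) * 4 ^ (m div 20) * 5 ^ m < (8::nat) ^ m"
proof -
  have four_pow: "(4::nat) ^ k = 2 ^ (2 * k)" for k
    by (simp add: power_mult)
  have "(2 ^ (m div 4) * 4 ^ (m div 20) * 5 ^ m :: nat) ^ 20 = 2 ^ (20 * (m div 4) + 40 * (m div 20)) * 5 ^ (20 * m)"
    by (simp add: four_pow power_mult_distrib mult.commute flip: power_mult power_add)
  also have "\<dots> \<le> 2 ^ (7 * m) * 5 ^ (20 * m)"
    by (intro mult_le_mono1 power_increasing) auto
  also have "\<dots> = (2 ^ 7 * 5 ^ 20) ^ m"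
    by (simp only: power_mult_distrib power_mult)
  also have "\<dots> < (8 ^ 20) ^ m"
    using assms by (intro power_strict_mono) auto
  also have "\<dots> = (8 ^ m) ^ 20"
    by (simp only: power_mult[symmetric] mult.commute)
  finally show ?thesis
    by (rule power_less_imp_less_base) simp
qed

lemma card_subsets_div20_bound:
  assumes "finite D" "D \<noteq> {}"
  shows "2 ^ (card D div 4) * card {S. S \<subseteq> D \<and> card S \<le> card D div 20} < 2 ^ card D"
proof -
  define m where "m = card D"
  define d where "d = m div 20"
  define B where "B = card {S. S \<subseteq> D \<and> card S \<le> d}"
  have "d \<le> m" by (simp add: d_def)
  have "B * 4 ^ (m - d) \<le> 5 ^ m"
    using card_subsets_card_le[OF assms(1), of d] binomial_partial_sum_le[OF \<open>d \<le> m\<close>]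
    unfolding B_def m_def by (meson le_trans mult_le_mono1)
  then have "2 ^ (m div 4) * B * 4 ^ (m - d) * 4 ^ d \<le> 2 ^ (m div 4) * 4 ^ d * 5 ^ m"
    by (simp add: algebra_simps)
  also have "\<dots> < 8 ^ m"
    using pow_div4_div20_lt[of m] assms by (simp add: m_def d_def card_gt_0_iff)
  also have "\<dots> = 2 ^ m * 4 ^ (m - d) * 4 ^ d"
    using \<open>d \<le> m\<close> by (simp add: mult.assoc power_add[symmetric] power_mult_distrib[symmetric])
  finally have "2 ^ (m div 4) * B < 2 ^ m"
    by simp
  then show ?thesis by (simp add: B_def m_def d_def)
qed

lemma two_pow_F_bound:
  "2 ^ F M * card {S. S \<subseteq> {1..M} \<and> card S \<le> M div 20} \<le> 2 ^ M"
proof (cases "M \<le> 19")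
  case True
  then have "{S. S \<subseteq> {1..M} \<and> card S \<le> M div 20} = {{}}"
  proof (intro equalityI subsetI)
    fix S assume "S \<in> {S. S \<subseteq> {1..M} \<and> card S \<le> M div 20}"
    with True have "S \<subseteq> {1..M}" "card S = 0" by auto
    then show "S \<in> {{}}" using finite_subset by fastforce
  qed simp
  with True show ?thesis by (simp add: F_def)
next
  case False
  then show ?thesis
    using card_subsets_div20_bound[of "{1..M}"] by (simp add: F_def)
qed

theorem lemma9p1:
  fixes M :: nat
  assumes "M \<ge> 1"
  shows "\<exists>xi :: nat \<Rightarrow> nat \<Rightarrow> bit. \<forall>I \<subseteq> {1..M}.
           20 * card I \<ge> 19 * M \<longrightarrow> spans_F2 (F M) xi I"
proof -
  obtain G where G: "\<forall>Y\<subseteq>{..<F M}. Y \<noteq> {} \<longrightarrow> M div 20 < card (codeword {1..M} G Y)"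
    using exists_code_min_distance[of "{1..M}" "F M" "M div 20"] two_pow_F_bound by auto
  have "spans_F2 (F M) (\<lambda>i j. of_bool (i \<in> G j)) I"
    if "I \<subseteq> {1..M}" "20 * card I \<ge> 19 * M" for I
  proof (rule spans_F2_if_min_distance[OF _ that(1) _ G])
    show "card ({1..M} - I) \<le> M div 20"
      using that by (simp add: card_Diff_subset finite_subset)
  qed simp
  then show ?thesis by blast
qed

end
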